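(* Let $n\ge 1$ and let $A\subseteq \mathbb{F}_3^n$ be a set such that the equation $a+b+c=0$ with $a,b,c\in A$ has no solutions except the trivial ones $a=b=c$. Then $$|A|\le 3\sum_{k=0}^{\lfloor 2n/3\rfloor}\binom{n}{k}_2 .$$
   Context: $\mathbb{F}_3=\{0,1,2\}$ is the field of integers modulo $3$. For integers $n\ge 0$ and $k$, the trinomial coefficient $\binom{n}{k}_2$ is defined as the coefficient of $x^k$ in $(1+x+x^2)^n$. *)

theory Defs
  imports "HOL-Analysis.Analysis" "HOL-Library.Numeral_Type" "HOL-Computational_Algebra.Polynomial"
begin

definition trinomial :: "nat \<Rightarrow> nat \<Rightarrow> nat" where
  "trinomial n k = coeff ([:1, 1, 1:] ^ n) k"

end

theory Submission
  imports Defs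
begin

text \<open>Slice-rank argument (Croot--Lev--Pach, Ellenberg--Gijswijt, in Tao's formulation).
  The function \<open>F(x, y, z) = \<Prod>\<^sub>i (1 - (x\<^sub>i + y\<^sub>i + z\<^sub>i)\<^sup>2)\<close> on \<open>\<bbbF>\<^sub>3\<^sup>n\<close> is the
  indicator of \<open>x + y + z = 0\<close>, so on \<open>A\<^sup>3\<close> it is a diagonal tensor with nonzero diagonal
  (\<open>3x = 0\<close>). Such a tensor cannot be written as a sum of fewer than \<open>|A|\<close> slices
  \<open>f(x) g(y, z)\<close>, \<open>f(y) g(x, z)\<close>, \<open>f(z) g(x, y)\<close>. On the other hand, expanding \<open>F\<close> gives
  monomials of total degree at most \<open>2n\<close> with every exponent at most \<open>2\<close>, so each has degree
  at most \<open>\<lfloor>2n/3\<rfloor>\<close> in one of \<open>x\<close>, \<open>y\<close>, \<open>z\<close>; grouping them accordingly yields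
  \<open>3 (\<Sum>k \<le> 2n/3. trinomial n k)\<close> slices, as \<open>trinomial n k\<close> counts the exponent vectors in
  \<open>{0, 1, 2}\<^sup>n\<close> of total degree \<open>k\<close>.\<close>

lemma back_substitute_pivot:
  fixes f :: "'j \<Rightarrow> 'a \<Rightarrow> 'k::comm_ring_1"
  assumes "finite A" "a0 \<in> A" "f j0 a0 * d = 1"
    and reduced: "\<forall>j\<in>J. (\<Sum>a\<in>A - {a0}. (f j a - f j a0 * d * f j0 a) * h' a) = 0"
  obtains h where "\<forall>a\<in>A - {a0}. h a = h' a" "\<forall>j\<in>insert j0 J. (\<Sum>a\<in>A. f j a * h a) = 0"
proof -
  define h where "h a = (if a = a0 then - d * (\<Sum>b\<in>A - {a0}. f j0 b * h' b) else h' a)" for a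
  have sum_h: "(\<Sum>a\<in>A. g a * h a) = g a0 * h a0 + (\<Sum>a\<in>A - {a0}. g a * h' a)" for g
  proof -
    have "(\<Sum>a\<in>A. g a * h a) = g a0 * h a0 + (\<Sum>a\<in>A - {a0}. g a * h a)"
      by (rule sum.remove[OF assms(1,2)])
    also have "(\<Sum>a\<in>A - {a0}. g a * h a) = (\<Sum>a\<in>A - {a0}. g a * h' a)"
      by (rule sum.cong) (auto simp: h_def)
    finally show ?thesis .
  qed
  have "(\<Sum>a\<in>A. f j a * h a) = 0" if "j \<in> insert j0 J" for j
  proof (cases "j = j0")
    case True
    have "f j0 a0 * h a0 = - (f j0 a0 * d) * (\<Sum>b\<in>A - {a0}. f j0 b * h' b)"
      by (simp add: h_def)
    then show ?thesis using True assms(3) sum_h[of "f j"] by simp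
  next
    case False
    then have "(\<Sum>a\<in>A - {a0}. f j a * h' a) = f j a0 * d * (\<Sum>a\<in>A - {a0}. f j0 a * h' a)"
      using reduced that by (simp add: algebra_simps sum_subtractf sum_distrib_left)
    then show ?thesis using sum_h[of "f j"] by (simp add: h_def)
  qed
  then show thesis by (intro that[of h]) (auto simp: h_def)
qed

text \<open>The numeral type \<open>3\<close> is not an instance of \<open>field\<close>, so the linear algebra below is
  done over commutative rings in which every nonzero element is a unit.\<close>

lemma underdetermined_system_nontrivial_solution:
  fixes f :: "'j \<Rightarrow> 'a \<Rightarrow> 'k::comm_ring_1"
  assumes units: "\<And>c::'k. c \<noteq> 0 \<Longrightarrow> c dvd 1"
    and "finite J" "finite A" "card J < card A"
  shows "\<exists>h. (\<exists>a\<in>A. h a \<noteq> 0) \<and> (\<forall>j\<in>J. (\<Sum>a\<in>A. f j a * h a) = 0)"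
  using assms(2-)
proof (induction J arbitrary: A f rule: finite_induct)
  case empty
  then obtain a where "a \<in> A" by fastforce
  then show ?case by (intro exI[of _ "\<lambda>_. 1"]) auto
next
  case (insert j0 J)
  show ?case
  proof (cases "\<forall>a\<in>A. f j0 a = 0")
    case True
    moreover obtain h where "\<exists>a\<in>A. h a \<noteq> 0" "\<forall>j\<in>J. (\<Sum>a\<in>A. f j a * h a) = 0"
      using insert.IH[of A f] insert.prems insert.hyps by auto
    ultimately show ?thesis by auto
  next
    case False
    then obtain a0 where a0: "a0 \<in> A" "f j0 a0 \<noteq> 0" by blast
    then obtain d where d: "f j0 a0 * d = 1" using units by (metis dvdE)
    have "finite (A - {a0})" "card J < card (A - {a0})"
      using insert a0 by (simp_all add: card_Diff_singleton)
    then obtain h' where h': "\<exists>a\<in>A - {a0}. h' a \<noteq> 0"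
      "\<forall>j\<in>J. (\<Sum>a\<in>A - {a0}. (f j a - f j a0 * d * f j0 a) * h' a) = 0"
      using insert.IH[of "A - {a0}" "\<lambda>j a. f j a - f j a0 * d * f j0 a"] by blast
    obtain h where "\<forall>a\<in>A - {a0}. h a = h' a" "\<forall>j\<in>insert j0 J. (\<Sum>a\<in>A. f j a * h a) = 0"
      using back_substitute_pivot[OF insert.prems(1) a0(1) d h'(2)] .
    moreover obtain a where "a \<in> A - {a0}" "h' a \<noteq> 0" using h'(1) by blast
    ultimately show ?thesis by (metis DiffD1)
  qed
qed

lemma unit_mult_eq_0_iff:
  fixes c :: "'k::comm_ring_1"
  assumes "c dvd 1"
  shows "c * x = 0 \<longleftrightarrow> x = 0"
proof -
  obtain d where "1 = c * d" using assms by (rule dvdE)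
  then have "x = d * (c * x)" by (metis mult.assoc mult.commute mult_1)
  then show ?thesis by auto
qed

lemma nontrivial_solution_vanishing_on:
  fixes f :: "'j \<Rightarrow> 'a \<Rightarrow> 'k::comm_ring_1"
  assumes units: "\<And>c::'k. c \<noteq> 0 \<Longrightarrow> c dvd 1"
    and "finite J" "finite A" "T \<subseteq> A" "card J + card T < card A"
  obtains w where "\<exists>a\<in>A - T. w a \<noteq> 0" "\<forall>a\<in>T. w a = 0" "\<forall>j\<in>J. (\<Sum>a\<in>A. f j a * w a) = 0"
proof -
  have "card J < card (A - T)"
    using assms(3-5) by (simp add: card_Diff_subset finite_subset)
  then obtain w where w: "\<exists>a\<in>A - T. w a \<noteq> 0" "\<forall>j\<in>J. (\<Sum>a\<in>A - T. f j a * w a) = 0"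
    using underdetermined_system_nontrivial_solution[OF units assms(2)] assms(3) by blast
  define w0 where "w0 a = (if a \<in> T then 0 else w a)" for a
  have "(\<Sum>a\<in>A. f j a * w0 a) = (\<Sum>a\<in>A - T. f j a * w a)" for j
    using assms(3) by (simp add: w0_def if_distrib sum.If_cases Diff_eq cong: if_cong)
  with w show thesis by (intro that[of w0]) (auto simp: w0_def)
qed

lemma solution_with_large_support:
  fixes f :: "'j \<Rightarrow> 'a \<Rightarrow> 'k::comm_ring_1"
  assumes units: "\<And>c::'k. c \<noteq> 0 \<Longrightarrow> c dvd 1"
    and "finite J" "finite A"
  obtains h where "\<forall>j\<in>J. (\<Sum>a\<in>A. f j a * h a) = 0"
    and "card A \<le> card {a\<in>A. h a \<noteq> 0} + card J"
proof -
  define solves where "solves h \<longleftrightarrow> (\<forall>j\<in>J. (\<Sum>a\<in>A. f j a * h a) = 0)" for h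
  have "solves (\<lambda>_. 0)" by (simp add: solves_def)
  moreover have "card {a\<in>A. h a \<noteq> 0} < Suc (card A)" for h :: "'a \<Rightarrow> 'k"
    using assms(3) by (simp add: le_imp_less_Suc card_mono)
  ultimately obtain h where h: "solves h"
    and max: "\<And>h'. solves h' \<Longrightarrow> card {a\<in>A. h' a \<noteq> 0} \<le> card {a\<in>A. h a \<noteq> 0}"
    using ex_has_greatest_nat[of solves _ "\<lambda>h. card {a\<in>A. h a \<noteq> 0}"] by blast
  define T where "T = {a\<in>A. h a \<noteq> 0}"
  have "card A \<le> card T + card J"
  proof (rule ccontr)
    assume "\<not> ?thesis"
    \<comment> \<open>Then adding to \<open>h\<close> a solution that vanishes on its support \<open>T\<close> enlarges the support.\<close>
    then obtain w where w: "\<exists>a\<in>A - T. w a \<noteq> 0" "\<forall>a\<in>T. w a = 0"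
      "\<forall>j\<in>J. (\<Sum>a\<in>A. f j a * w a) = 0"
      using nontrivial_solution_vanishing_on[OF units assms(2,3), of T f] by (auto simp: T_def)
    then obtain a1 where a1: "a1 \<in> A - T" "w a1 \<noteq> 0" by blast
    have "solves (\<lambda>a. h a + w a)"
      using h w(3) by (simp add: solves_def distrib_left sum.distrib)
    moreover have "insert a1 T \<subseteq> {a\<in>A. h a + w a \<noteq> 0}"
      using a1 w(2) by (auto simp: T_def)
    then have "card (insert a1 T) \<le> card {a\<in>A. h a + w a \<noteq> 0}"
      using assms(3) by (intro card_mono) auto
    ultimately show False
      using max[of "\<lambda>a. h a + w a"] a1 assms(3) by (simp add: T_def)
  qed
  with h show thesis by (intro that[of h]) (simp_all add: solves_def T_def)
qed

lemma card_nonzero_diagonal_le_rank: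
  fixes u v :: "'i \<Rightarrow> 'a \<Rightarrow> 'k::comm_ring_1" and M :: "'a \<Rightarrow> 'a \<Rightarrow> 'k"
  assumes units: "\<And>c::'k. c \<noteq> 0 \<Longrightarrow> c dvd 1"
    and "finite I" "finite A"
    and rank: "\<And>x y. x \<in> A \<Longrightarrow> y \<in> A \<Longrightarrow> M x y = (\<Sum>i\<in>I. u i x * v i y)"
    and diagonal: "\<And>x y. x \<in> A \<Longrightarrow> y \<in> A \<Longrightarrow> x \<noteq> y \<Longrightarrow> M x y = 0"
  shows "card {x\<in>A. M x x \<noteq> 0} \<le> card I"
proof (rule ccontr)
  define S where "S = {x\<in>A. M x x \<noteq> 0}"
  assume "\<not> card {x\<in>A. M x x \<noteq> 0} \<le> card I"
  moreover have "finite S" using assms(3) by (simp add: S_def)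
  ultimately obtain h where h: "\<exists>x\<in>S. h x \<noteq> 0" "\<forall>i\<in>I. (\<Sum>y\<in>S. v i y * h y) = 0"
    using underdetermined_system_nontrivial_solution[OF units assms(2) \<open>finite S\<close>, of v]
    by (auto simp: S_def)
  then obtain x where x: "x \<in> S" "h x \<noteq> 0" by blast
  have "M x x * h x = (\<Sum>y\<in>S. if y = x then M x x * h x else 0)"
    using x(1) \<open>finite S\<close> by simp
  also have "\<dots> = (\<Sum>y\<in>S. M x y * h y)"
    using x(1) diagonal by (intro sum.cong) (auto simp: S_def)
  also have "\<dots> = (\<Sum>i\<in>I. u i x * (\<Sum>y\<in>S. v i y * h y))"
    using x(1) rank
    by (simp add: S_def sum_distrib_left sum_distrib_right mult.assoc sum.swap[of _ I])
  also have "\<dots> = 0" using h(2) by simp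
  finally show False using x units by (simp add: S_def unit_mult_eq_0_iff)
qed

lemma card_le_slice_decomposition:
  fixes F :: "'a \<Rightarrow> 'a \<Rightarrow> 'a \<Rightarrow> 'k::comm_ring_1"
  assumes units: "\<And>c::'k. c \<noteq> 0 \<Longrightarrow> c dvd 1"
    and "finite I1" "finite I2" "finite I3" "finite A"
    and slices: "\<And>x y z. x \<in> A \<Longrightarrow> y \<in> A \<Longrightarrow> z \<in> A \<Longrightarrow> F x y z =
       (\<Sum>i\<in>I1. p1 i x * q1 i y z) + (\<Sum>i\<in>I2. p2 i y * q2 i x z) + (\<Sum>i\<in>I3. p3 i z * q3 i x y)"
    and off_diagonal: "\<And>x y z. x \<in> A \<Longrightarrow> y \<in> A \<Longrightarrow> z \<in> A \<Longrightarrow> F x y z \<noteq> 0 \<Longrightarrow> x = y \<and> y = z"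
    and diagonal: "\<And>x. x \<in> A \<Longrightarrow> F x x x \<noteq> 0"
  shows "card A \<le> card I1 + card I2 + card I3"
proof -
  \<comment> \<open>Contracting the third argument against \<open>h\<close> kills the third family of slices and
    leaves a diagonal matrix of rank at most \<open>card I1 + card I2\<close>.\<close>
  obtain h where h: "\<forall>i\<in>I3. (\<Sum>z\<in>A. p3 i z * h z) = 0"
    and supp: "card A \<le> card {z\<in>A. h z \<noteq> 0} + card I3"
    using solution_with_large_support[OF units assms(4,5)] .
  define M where "M x y = (\<Sum>z\<in>A. F x y z * h z)" for x y
  define u where "u = case_sum p1 (\<lambda>i x. \<Sum>z\<in>A. q2 i x z * h z)"
  define v where "v = case_sum (\<lambda>i y. \<Sum>z\<in>A. q1 i y z * h z) p2"
  have rank: "M x y = (\<Sum>i\<in>I1 <+> I2. u i x * v i y)" if "x \<in> A" "y \<in> A" for x y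
  proof -
    have "M x y = (\<Sum>z\<in>A. (\<Sum>i\<in>I1. p1 i x * (q1 i y z * h z))
        + (\<Sum>i\<in>I2. p2 i y * (q2 i x z * h z)) + (\<Sum>i\<in>I3. q3 i x y * (p3 i z * h z)))"
      unfolding M_def using that slices
      by (intro sum.cong) (auto simp: sum_distrib_left sum_distrib_right algebra_simps)
    also have "\<dots> = (\<Sum>i\<in>I1. p1 i x * (\<Sum>z\<in>A. q1 i y z * h z))
        + (\<Sum>i\<in>I2. p2 i y * (\<Sum>z\<in>A. q2 i x z * h z))
        + (\<Sum>i\<in>I3. q3 i x y * (\<Sum>z\<in>A. p3 i z * h z))"
      by (simp only: sum.distrib sum_distrib_left sum.swap[of _ A])
    finally show ?thesis
      using h assms(2,3) by (simp add: sum.Plus u_def v_def mult.commute)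
  qed
  have diagonal_M: "M x y = 0" if "x \<in> A" "y \<in> A" "x \<noteq> y" for x y
    unfolding M_def using off_diagonal that by (intro sum.neutral) force
  have "M x x = (\<Sum>z\<in>A. if z = x then F x x x * h x else 0)" if "x \<in> A" for x
    unfolding M_def using off_diagonal that by (intro sum.cong) force+
  then have "{x\<in>A. M x x \<noteq> 0} = {z\<in>A. h z \<noteq> 0}"
    using assms(5) diagonal units by (auto simp: unit_mult_eq_0_iff)
  moreover have "card {x\<in>A. M x x \<noteq> 0} \<le> card (I1 <+> I2)"
    using card_nonzero_diagonal_le_rank[OF units _ assms(5) rank diagonal_M] assms(2,3) by simp
  ultimately show ?thesis using supp assms(2,3) by (simp add: card_Plus)
qed

lemma sum_group_factor:
  fixes m :: "'b \<Rightarrow> 'c::semiring_0"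
  assumes "finite S" "finite G" "\<phi> ` S \<subseteq> G"
  shows "(\<Sum>s\<in>S. m (\<phi> s) * r s) = (\<Sum>a\<in>G. m a * (\<Sum>s\<in>{s\<in>S. \<phi> s = a}. r s))"
proof -
  have "(\<Sum>s\<in>S. m (\<phi> s) * r s) = (\<Sum>a\<in>G. \<Sum>s\<in>{s\<in>S. \<phi> s = a}. m (\<phi> s) * r s)"
    by (rule sum.group[OF assms, symmetric])
  also have "\<dots> = (\<Sum>a\<in>G. m a * (\<Sum>s\<in>{s\<in>S. \<phi> s = a}. r s))"
    by (auto simp: sum_distrib_left intro!: sum.cong)
  finally show ?thesis .
qed

lemma sum_slice_form:
  fixes C :: "'s \<Rightarrow> 'k::comm_semiring_1" and m :: "'e \<Rightarrow> 'a \<Rightarrow> 'k"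
  assumes "finite S" "finite G" and covered: "\<forall>\<sigma>\<in>S. \<alpha> \<sigma> \<in> G \<or> \<beta> \<sigma> \<in> G \<or> \<gamma> \<sigma> \<in> G"
  obtains q1 q2 q3 where "\<And>x y z. (\<Sum>\<sigma>\<in>S. C \<sigma> * m (\<alpha> \<sigma>) x * m (\<beta> \<sigma>) y * m (\<gamma> \<sigma>) z) =
    (\<Sum>a\<in>G. m a x * q1 a y z) + (\<Sum>a\<in>G. m a y * q2 a x z) + (\<Sum>a\<in>G. m a z * q3 a x y)"
proof -
  define S1 where "S1 = {\<sigma>\<in>S. \<alpha> \<sigma> \<in> G}"
  define S2 where "S2 = {\<sigma>\<in>S - S1. \<beta> \<sigma> \<in> G}"
  define S3 where "S3 = S - S1 - S2"
  define q1 where "q1 a y z = (\<Sum>\<sigma>\<in>{\<sigma>\<in>S1. \<alpha> \<sigma> = a}. C \<sigma> * m (\<beta> \<sigma>) y * m (\<gamma> \<sigma>) z)" for a y z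
  define q2 where "q2 a x z = (\<Sum>\<sigma>\<in>{\<sigma>\<in>S2. \<beta> \<sigma> = a}. C \<sigma> * m (\<alpha> \<sigma>) x * m (\<gamma> \<sigma>) z)" for a x z
  define q3 where "q3 a x y = (\<Sum>\<sigma>\<in>{\<sigma>\<in>S3. \<gamma> \<sigma> = a}. C \<sigma> * m (\<alpha> \<sigma>) x * m (\<beta> \<sigma>) y)" for a x y
  have fin: "finite S1" "finite S2" "finite S3"
    using assms(1) by (simp_all add: S1_def S2_def S3_def)
  have "\<gamma> ` S3 \<subseteq> G" using covered by (auto simp: S1_def S2_def S3_def)
  have partition: "sum g S = sum g S1 + sum g S2 + sum g S3" for g :: "'s \<Rightarrow> 'k"
  proof -
    have "sum g S = sum g (S - S1) + sum g S1"
      using assms(1) by (intro sum.subset_diff) (auto simp: S1_def)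
    moreover have "sum g (S - S1) = sum g S3 + sum g S2"
      using assms(1) unfolding S3_def by (intro sum.subset_diff) (auto simp: S2_def)
    ultimately show ?thesis by (simp add: ac_simps)
  qed
  have "(\<Sum>\<sigma>\<in>S. C \<sigma> * m (\<alpha> \<sigma>) x * m (\<beta> \<sigma>) y * m (\<gamma> \<sigma>) z) =
    (\<Sum>a\<in>G. m a x * q1 a y z) + (\<Sum>a\<in>G. m a y * q2 a x z) + (\<Sum>a\<in>G. m a z * q3 a x y)" for x y z
  proof -
    let ?t = "\<lambda>\<sigma>. C \<sigma> * m (\<alpha> \<sigma>) x * m (\<beta> \<sigma>) y * m (\<gamma> \<sigma>) z"
    have "(\<Sum>\<sigma>\<in>S1. ?t \<sigma>) = (\<Sum>a\<in>G. m a x * q1 a y z)"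
      using sum_group_factor[OF fin(1) assms(2), where \<phi>=\<alpha> and m="\<lambda>a. m a x"
          and r="\<lambda>\<sigma>. C \<sigma> * m (\<beta> \<sigma>) y * m (\<gamma> \<sigma>) z"]
      by (auto simp: S1_def q1_def ac_simps)
    moreover have "(\<Sum>\<sigma>\<in>S2. ?t \<sigma>) = (\<Sum>a\<in>G. m a y * q2 a x z)"
      using sum_group_factor[OF fin(2) assms(2), where \<phi>=\<beta> and m="\<lambda>a. m a y"
          and r="\<lambda>\<sigma>. C \<sigma> * m (\<alpha> \<sigma>) x * m (\<gamma> \<sigma>) z"]
      by (auto simp: S2_def q2_def ac_simps)
    moreover have "(\<Sum>\<sigma>\<in>S3. ?t \<sigma>) = (\<Sum>a\<in>G. m a z * q3 a x y)"
      using sum_group_factor[OF fin(3) assms(2) \<open>\<gamma> ` S3 \<subseteq> G\<close>, where m="\<lambda>a. m a z"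
          and r="\<lambda>\<sigma>. C \<sigma> * m (\<alpha> \<sigma>) x * m (\<beta> \<sigma>) y"]
      by (simp add: q3_def ac_simps)
    ultimately show ?thesis by (simp only: partition)
  qed
  then show thesis by (rule that)
qed

lemma square_of_nonzero_3: "(x::3) \<noteq> 0 \<Longrightarrow> x\<^sup>2 = 1"
  using exhaust_3[of x] by (auto simp: power2_eq_square)

lemma nonzero_unit_3: "(c::3) \<noteq> 0 \<Longrightarrow> c dvd 1"
  using square_of_nonzero_3 by (metis dvd_triv_right power2_eq_square)

lemma triple_eq_zero_3: "(x::3^'n) + x + x = 0"
proof -
  have "(c::3) + c + c = 0" for c using exhaust_3[of c] by auto
  then show ?thesis by (simp add: vec_eq_iff)
qed

definition zero_sum_indicator :: "3^'n \<Rightarrow> 3^'n \<Rightarrow> 3^'n \<Rightarrow> 3" where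
  "zero_sum_indicator x y z = (\<Prod>i\<in>UNIV. 1 - (x$i + y$i + z$i)\<^sup>2)"

lemma zero_sum_indicator_eq: "zero_sum_indicator x y z = (if x + y + z = 0 then 1 else 0)"
proof (cases "x + y + z = 0")
  case True
  then have "x$i + y$i + z$i = 0" for i by (simp add: vec_eq_iff)
  with True show ?thesis by (simp add: zero_sum_indicator_def)
next
  case False
  then obtain i where "x$i + y$i + z$i \<noteq> 0" by (auto simp: vec_eq_iff)
  then have "1 - (x$i + y$i + z$i)\<^sup>2 = 0" by (simp add: square_of_nonzero_3)
  then have "zero_sum_indicator x y z = 0"
    unfolding zero_sum_indicator_def by (intro prod_zero) auto
  with False show ?thesis by simp
qed

definition eval_monomial :: "('n \<Rightarrow> nat) \<Rightarrow> 'a^'n \<Rightarrow> 'a::comm_monoid_mult" where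
  "eval_monomial e x = (\<Prod>i\<in>UNIV. x$i ^ e i)"

text \<open>Since \<open>-2 = 1\<close> in \<open>\<bbbF>\<^sub>3\<close>, \<open>1 - (a + b + c)\<^sup>2 = 1 - a\<^sup>2 - b\<^sup>2 - c\<^sup>2 + a b + a c + b c\<close>;
  the triples below are the exponents of \<open>(a, b, c)\<close> in these monomials.\<close>

definition quadratic_exponents :: "(nat \<times> nat \<times> nat) set" where
  "quadratic_exponents = {(0,0,0), (2,0,0), (0,2,0), (0,0,2), (1,1,0), (1,0,1), (0,1,1)}"

definition quadratic_coeff :: "nat \<times> nat \<times> nat \<Rightarrow> 3" where
  "quadratic_coeff = (\<lambda>(p, q, r). if p = 2 \<or> q = 2 \<or> r = 2 then -1 else 1)"

lemma one_minus_square_sum_3: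
  fixes a b c :: 3
  shows "1 - (a + b + c)\<^sup>2 =
    (\<Sum>t\<in>quadratic_exponents. quadratic_coeff t * a ^ fst t * b ^ fst (snd t) * c ^ snd (snd t))"
proof -
  have three: "(3::3) = 0" by simp
  show ?thesis
    by (simp add: quadratic_exponents_def quadratic_coeff_def power2_eq_square algebra_simps)
      (simp add: mult.assoc[symmetric] three)
qed

lemma zero_sum_indicator_expansion:
  "zero_sum_indicator x y z = (\<Sum>\<sigma>\<in>PiE UNIV (\<lambda>_. quadratic_exponents).
     (\<Prod>i\<in>UNIV. quadratic_coeff (\<sigma> i)) * eval_monomial (fst \<circ> \<sigma>) x
       * eval_monomial (fst \<circ> snd \<circ> \<sigma>) y * eval_monomial (snd \<circ> snd \<circ> \<sigma>) z)"
proof -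
  have "zero_sum_indicator x y z = (\<Prod>i\<in>UNIV. \<Sum>t\<in>quadratic_exponents.
      quadratic_coeff t * x$i ^ fst t * y$i ^ fst (snd t) * z$i ^ snd (snd t))"
    by (simp add: zero_sum_indicator_def one_minus_square_sum_3)
  also have "\<dots> = (\<Sum>\<sigma>\<in>PiE UNIV (\<lambda>_. quadratic_exponents). \<Prod>i\<in>UNIV.
      quadratic_coeff (\<sigma> i) * x$i ^ fst (\<sigma> i) * y$i ^ fst (snd (\<sigma> i)) * z$i ^ snd (snd (\<sigma> i)))"
    by (rule prod_sum_PiE) (simp_all add: quadratic_exponents_def)
  also have "\<dots> = (\<Sum>\<sigma>\<in>PiE UNIV (\<lambda>_. quadratic_exponents).
     (\<Prod>i\<in>UNIV. quadratic_coeff (\<sigma> i)) * eval_monomial (fst \<circ> \<sigma>) x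
       * eval_monomial (fst \<circ> snd \<circ> \<sigma>) y * eval_monomial (snd \<circ> snd \<circ> \<sigma>) z)"
    by (simp add: prod.distrib eval_monomial_def)
  finally show ?thesis .
qed

definition reduced_exponents :: "nat \<Rightarrow> ('n::finite \<Rightarrow> nat) set" where
  "reduced_exponents d = {e \<in> PiE UNIV (\<lambda>_. {0..2}). (\<Sum>i\<in>UNIV. e i) \<le> d}"

lemma finite_reduced_exponents: "finite (reduced_exponents d)"
  by (simp add: reduced_exponents_def finite_PiE)

lemma quadratic_exponents_cover:
  fixes \<sigma> :: "'n::finite \<Rightarrow> nat \<times> nat \<times> nat"
  assumes "\<sigma> \<in> PiE UNIV (\<lambda>_. quadratic_exponents)" and "2 * CARD('n) < 3 * Suc d"
  shows "fst \<circ> \<sigma> \<in> reduced_exponents d \<or> fst \<circ> snd \<circ> \<sigma> \<in> reduced_exponents d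
    \<or> snd \<circ> snd \<circ> \<sigma> \<in> reduced_exponents d"
proof -
  have bounded: "fst (\<sigma> i) + fst (snd (\<sigma> i)) + snd (snd (\<sigma> i)) \<le> 2" for i
  proof -
    have "\<sigma> i \<in> quadratic_exponents" using assms(1) by auto
    then show ?thesis by (auto simp: quadratic_exponents_def)
  qed
  then have "fst \<circ> \<sigma> \<in> PiE UNIV (\<lambda>_. {0..2})" "fst \<circ> snd \<circ> \<sigma> \<in> PiE UNIV (\<lambda>_. {0..2})"
    "snd \<circ> snd \<circ> \<sigma> \<in> PiE UNIV (\<lambda>_. {0..2})"
    by (simp_all add: PiE_iff) (meson add_leD1 add_leD2)+
  moreover have "(\<Sum>i\<in>UNIV. fst (\<sigma> i)) + (\<Sum>i\<in>UNIV. fst (snd (\<sigma> i))) + (\<Sum>i\<in>UNIV. snd (snd (\<sigma> i)))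
      \<le> 2 * CARD('n)"
  proof -
    have "(\<Sum>i\<in>UNIV. fst (\<sigma> i) + fst (snd (\<sigma> i)) + snd (snd (\<sigma> i))) \<le> (\<Sum>i\<in>(UNIV::'n set). 2)"
      by (rule sum_mono) (rule bounded)
    then show ?thesis by (simp add: sum.distrib)
  qed
  ultimately show ?thesis using assms(2) by (auto simp: reduced_exponents_def)
qed

lemma zero_sum_indicator_slices:
  assumes "2 * CARD('n::finite) < 3 * Suc d"
  obtains q1 q2 q3 where "\<And>x y z :: 3^'n. zero_sum_indicator x y z =
      (\<Sum>e\<in>reduced_exponents d. eval_monomial e x * q1 e y z)
    + (\<Sum>e\<in>reduced_exponents d. eval_monomial e y * q2 e x z)
    + (\<Sum>e\<in>reduced_exponents d. eval_monomial e z * q3 e x y)"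
proof -
  have fin: "finite (PiE (UNIV::'n set) (\<lambda>_. quadratic_exponents))"
    by (simp add: finite_PiE quadratic_exponents_def)
  have cover: "\<forall>\<sigma>\<in>PiE (UNIV::'n set) (\<lambda>_. quadratic_exponents).
      fst \<circ> \<sigma> \<in> reduced_exponents d \<or> fst \<circ> snd \<circ> \<sigma> \<in> reduced_exponents d
      \<or> snd \<circ> snd \<circ> \<sigma> \<in> reduced_exponents d"
    by (rule ballI, rule quadratic_exponents_cover[OF _ assms])
  show thesis
  proof (rule sum_slice_form[OF fin finite_reduced_exponents cover])
    fix q1 q2 q3
    assume eq: "\<And>x y z :: 3^'n.
      (\<Sum>\<sigma>\<in>PiE UNIV (\<lambda>_. quadratic_exponents). (\<Prod>i\<in>UNIV. quadratic_coeff (\<sigma> i))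
        * eval_monomial (fst \<circ> \<sigma>) x * eval_monomial (fst \<circ> snd \<circ> \<sigma>) y
        * eval_monomial (snd \<circ> snd \<circ> \<sigma>) z) =
      (\<Sum>e\<in>reduced_exponents d. eval_monomial e x * q1 e y z)
    + (\<Sum>e\<in>reduced_exponents d. eval_monomial e y * q2 e x z)
    + (\<Sum>e\<in>reduced_exponents d. eval_monomial e z * q3 e x y)"
    show thesis
      by (rule that[of q1 q2 q3]) (simp only: zero_sum_indicator_expansion eq)
  qed
qed

lemma prod_monom_one:
  "finite I \<Longrightarrow> (\<Prod>i\<in>I. monom (1::'a::comm_semiring_1) (f i)) = monom 1 (\<Sum>i\<in>I. f i)"
  by (induction I rule: finite_induct) (auto simp: mult_monom)

lemma trinomial_eq_card:
  assumes "finite I"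
  shows "trinomial (card I) k = card {e \<in> PiE I (\<lambda>_. {0..2}). (\<Sum>i\<in>I. e i) = k}"
proof -
  define P where "P = PiE I (\<lambda>_. {0..2::nat})"
  have "[:1, 1, 1:] = (\<Sum>j\<in>{0..2}. monom (1::nat) j)"
    by (simp add: poly_eq_iff coeff_pCons numeral_2_eq_2 split: nat.split)
  then have "[:1, 1, 1:] ^ card I = (\<Prod>i\<in>I. \<Sum>j\<in>{0..2}. monom (1::nat) j)"
    by simp
  also have "\<dots> = (\<Sum>e\<in>P. \<Prod>i\<in>I. monom 1 (e i))"
    unfolding P_def by (rule prod_sum_PiE) (simp_all add: assms)
  also have "\<dots> = (\<Sum>e\<in>P. monom 1 (\<Sum>i\<in>I. e i))"
    by (simp only: prod_monom_one[OF assms])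
  finally have expansion: "[:1, 1, 1::nat:] ^ card I = (\<Sum>e\<in>P. monom 1 (\<Sum>i\<in>I. e i))" .
  have "trinomial (card I) k = (\<Sum>e\<in>P. if (\<Sum>i\<in>I. e i) = k then 1 else 0)"
    unfolding trinomial_def expansion coeff_sum coeff_monom by (rule refl)
  also have "\<dots> = card {e\<in>P. (\<Sum>i\<in>I. e i) = k}"
    using assms by (simp add: P_def finite_PiE flip: sum.inter_filter)
  finally show ?thesis by (simp add: P_def)
qed

lemma card_reduced_exponents:
  "card (reduced_exponents d :: ('n::finite \<Rightarrow> nat) set) = (\<Sum>k = 0..d. trinomial CARD('n) k)"
proof -
  let ?R = "reduced_exponents d :: ('n \<Rightarrow> nat) set"
  have "card ?R = (\<Sum>k = 0..d. \<Sum>e\<in>{e\<in>?R. (\<Sum>i\<in>UNIV. e i) = k}. 1)"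
    unfolding card_eq_sum
    by (rule sum.group[OF finite_reduced_exponents finite_atLeastAtMost, symmetric])
      (auto simp: reduced_exponents_def)
  also have "\<dots> = (\<Sum>k = 0..d. trinomial CARD('n) k)"
    by (intro sum.cong)
      (auto simp: trinomial_eq_card reduced_exponents_def intro!: arg_cong[where f=card])
  finally show ?thesis .
qed

theorem mainTheorem1:
  fixes A :: "(3 ^ 'n) set"
  assumes "\<forall>a\<in>A. \<forall>b\<in>A. \<forall>c\<in>A. a + b + c = 0 \<longrightarrow> a = b \<and> b = c"
  shows "card A \<le> 3 * (\<Sum>k = 0..(2 * CARD('n)) div 3. trinomial CARD('n) k)"
proof -
  let ?R = "reduced_exponents (2 * CARD('n) div 3) :: ('n \<Rightarrow> nat) set"
  have bound: "2 * CARD('n) < 3 * Suc (2 * CARD('n) div 3)" by presburger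
  obtain q1 q2 q3 where slices: "\<And>x y z :: 3^'n. zero_sum_indicator x y z =
      (\<Sum>e\<in>?R. eval_monomial e x * q1 e y z) + (\<Sum>e\<in>?R. eval_monomial e y * q2 e x z)
    + (\<Sum>e\<in>?R. eval_monomial e z * q3 e x y)"
    using zero_sum_indicator_slices[OF bound] by auto
  have "card A \<le> card ?R + card ?R + card ?R"
  proof (rule card_le_slice_decomposition[OF nonzero_unit_3 _ _ _ _ slices])
    show "x = y \<and> y = z" if "x \<in> A" "y \<in> A" "z \<in> A" "zero_sum_indicator x y z \<noteq> 0" for x y z
      using assms that by (simp add: zero_sum_indicator_eq split: if_splits)
    show "zero_sum_indicator x x x \<noteq> 0" for x :: "3^'n"
      unfolding zero_sum_indicator_eq triple_eq_zero_3 by simp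
  qed (simp_all add: finite_reduced_exponents)
  then show ?thesis by (simp add: card_reduced_exponents)
qed

end
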